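(* For every positive integer $n$, $$M_e(\mathcal{D},n)-M_o(\mathcal{D},n)=\begin{cases} 1, & \text{if } n\in\mathcal{P} \text{ and } R(n) \text{ is odd and positive},\\ -1, & \text{if } n\in\mathcal{P} \text{ and } R(n) \text{ is not odd and positive},\\ 2, & \text{if } n\notin\mathcal{P},\ R(\lfloor n\rfloor_p) \text{ is odd and positive, and } n\equiv\lfloor n\rfloor_p \pmod 2,\\ -2, & \text{if } n\notin\mathcal{P},\ R(\lfloor n\rfloor_p) \text{ is even and positive, and } n\equiv\lfloor n\rfloor_p \pmod 2,\\ -2(-1)^{n-\lfloor n\rfloor_p}, & \text{if } n\notin\mathcal{P} \text{ and } R(\lfloor n\rfloor_p) \text{ is even and negative},\\ 0, & \text{otherwise}. \end{cases}$$
   Context: $M_e(\mathcal{D},n)$ (resp. $M_o(\mathcal{D},n)$) is the number of partitions of $n$ into distinct parts with even (resp. odd) crank, where for a partition into distinct parts the crank is its largest part if $1$ is not a part, and is (number of parts) $-2$ if $1$ is a part. $\mathcal{P}=\{m(3m+1)/2: m\in\mathbb{Z}\}$ is the set of (generalized) pentagonal numbers; for $n=m(3m+1)/2\in\mathcal{P}$ put $R(n)=m$ (well defined since distinct integers $m$ give distinct values). $\lfloor n\rfloor_p$ denotes the largest element of $\mathcal{P}$ that is $\le n$. *)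

theory Defs
  imports Main
begin

text \<open>A partition of n into distinct parts is identified with the finite set of its
  parts, a set of positive integers summing to n (all parts are then in {1..n}).\<close>
definition distinct_partitions :: "nat \<Rightarrow> nat set set" where
  "distinct_partitions n = {S. finite S \<and> 0 \<notin> S \<and> \<Sum>S = n}"

definition dcrank :: "nat set \<Rightarrow> int" where
  "dcrank S = (if 1 \<notin> S then int (Max S) else int (card S) - 2)"

definition M_e :: "nat \<Rightarrow> nat" where
  "M_e n = card {S \<in> distinct_partitions n. even (dcrank S)}"

definition M_o :: "nat \<Rightarrow> nat" where
  "M_o n = card {S \<in> distinct_partitions n. odd (dcrank S)}"

definition pent :: "int \<Rightarrow> int" where
  "pent m = m * (3 * m + 1) div 2"

definition pentagonals :: "int set" where
  "pentagonals = range pent"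

definition R :: "int \<Rightarrow> int" where
  "R n = (THE m. pent m = n)"

definition pfloor :: "int \<Rightarrow> int" where
  "pfloor n = Max {p \<in> pentagonals. p \<le> n}"

end

theory Submission
  imports Defs
begin

text \<open>Weighted by \<open>(-1)^crank\<close>, \<open>M_e(n) - M_o(n)\<close> becomes a signed sum over the distinct
  partitions of \<open>n\<close>. Partitions without the part 1 contribute \<open>(-1)^(largest part)\<close>.
  Removing the part 1 from the others leaves the partitions of \<open>n - 1\<close> without the part 1,
  each contributing \<open>-(-1)^(number of parts)\<close>. Franklin's involution changes both the
  number of parts and the largest part by one, so over all distinct partitions of \<open>n\<close> the
  signs \<open>(-1)^(number of parts)\<close> and \<open>(-1)^(largest part)\<close> sum to 0 unless \<open>n = pent r\<close>,
  where the sums are \<open>(-1)^r\<close> and \<open>sgn r\<close>. Splitting off the part 1 once more shows that the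
  sums over partitions without the part 1 are running sums, resp. alternating running sums, of
  these two sequences; they are evaluated by induction along the pentagonal numbers
  \<open>pent 0 < pent (-1) < pent 1 < pent (-2) < pent 2 < \<dots>\<close>.\<close>

section \<open>Pentagonal numbers\<close>

lemma double_pent: "2 * pent m = m * (3 * m + 1)"
proof -
  have "even (m * (3 * m + 1))" by auto
  then show ?thesis unfolding pent_def by simp
qed

lemma double_pent_diff: "2 * (pent a - pent b) = (a - b) * (3 * (a + b) + 1)"
  using double_pent[of a] double_pent[of b] by (simp add: algebra_simps)

lemma inj_pent: "inj pent"
proof
  fix a b assume "pent a = pent b"
  then have "(a - b) * (3 * (a + b) + 1) = 0"
    using double_pent_diff[of a b] by simp
  moreover have "3 * (a + b) + 1 \<noteq> 0" by presburger
  ultimately show "a = b" by simp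
qed

lemma pent_0 [simp]: "pent 0 = 0"
  unfolding pent_def by simp

lemma pent_eq_0_iff [simp]: "pent m = 0 \<longleftrightarrow> m = 0"
  using inj_pent pent_0 by (metis injD)

lemma pent_nonneg: "0 \<le> pent m"
  using double_pent[of m] zero_le_mult_iff[of m "3 * m + 1"] by linarith

lemma R_pent [simp]: "R (pent m) = m"
  unfolding R_def using inj_pent by (auto dest: injD)

lemma pent_in_pentagonals [simp]: "pent m \<in> pentagonals"
  unfolding pentagonals_def by simp

lemma pent_R: "x \<in> pentagonals \<Longrightarrow> pent (R x) = x"
  unfolding pentagonals_def by auto

lemma pent_preimage: "{r. pent r = x} = (if x \<in> pentagonals then {R x} else {})"
  unfolding pentagonals_def by (auto simp: inj_eq[OF inj_pent])

lemma pfloor_props: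
  assumes "0 \<le> x"
  shows "pfloor x \<in> pentagonals" and "pfloor x \<le> x"
    and "\<And>p. p \<in> pentagonals \<Longrightarrow> p \<le> x \<Longrightarrow> p \<le> pfloor x"
proof -
  have "{p \<in> pentagonals. p \<le> x} \<subseteq> {0..x}"
    unfolding pentagonals_def using pent_nonneg by auto
  then have fin: "finite {p \<in> pentagonals. p \<le> x}"
    by (rule finite_subset) simp
  have "0 \<in> {p \<in> pentagonals. p \<le> x}"
    using assms pent_in_pentagonals[of 0] by simp
  then have "pfloor x \<in> {p \<in> pentagonals. p \<le> x}"
    unfolding pfloor_def using Max_in[OF fin] by blast
  then show "pfloor x \<in> pentagonals" "pfloor x \<le> x" by auto
  show "\<And>p. p \<in> pentagonals \<Longrightarrow> p \<le> x \<Longrightarrow> p \<le> pfloor x"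
    unfolding pfloor_def using fin by simp
qed

lemma pfloor_eqI:
  assumes "0 \<le> x" "q \<in> pentagonals" "q \<le> x"
    and "\<And>p. p \<in> pentagonals \<Longrightarrow> p \<le> x \<Longrightarrow> p \<le> q"
  shows "pfloor x = q"
  using pfloor_props[OF assms(1)] assms(2-4) by (meson antisym)

lemma pfloor_pentagonal: "x \<in> pentagonals \<Longrightarrow> pfloor x = x"
  using pfloor_eqI[of x x] pent_nonneg unfolding pentagonals_def by auto

lemma pfloor_Suc:
  assumes "int (Suc n) \<notin> pentagonals"
  shows "pfloor (int (Suc n)) = pfloor (int n)"
proof (rule pfloor_eqI)
  show "pfloor (int n) \<in> pentagonals" "pfloor (int n) \<le> int (Suc n)"
    using pfloor_props[of "int n"] by auto
  show "p \<le> pfloor (int n)" if "p \<in> pentagonals" "p \<le> int (Suc n)" for p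
    using that assms pfloor_props(3)[of "int n"] by (cases "p = int (Suc n)") auto
qed simp

lemma pfloor_ge_1:
  assumes "1 \<le> x"
  shows "1 \<le> pfloor x"
proof -
  have "pent (-1) = 1"
    by (simp add: pent_def)
  then show ?thesis
    using assms pfloor_props(3)[of x "pent (-1)"] pent_in_pentagonals[of "-1"] by simp
qed

lemma R_pfloor_nonzero:
  assumes "1 \<le> x"
  shows "R (pfloor x) \<noteq> 0"
  using pfloor_props(1)[of x] pfloor_ge_1[OF assms] pent_R[of "pfloor x"] assms by fastforce

lemma no_pent_between_neg_pos:
  assumes "0 < r"
  shows "pent m \<le> pent (-r) \<or> pent r \<le> pent m"
proof (cases "r \<le> m \<or> m < -r")
  case True
  then have "0 \<le> (m - r) * (3 * (m + r) + 1)"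
    using assms by (auto intro: mult_nonpos_nonpos)
  then show ?thesis using double_pent_diff[of m r] by simp
next
  case False
  then have "(m + r) * (3 * (m - r) + 1) \<le> 0"
    using assms by (intro mult_nonneg_nonpos) auto
  then show ?thesis using double_pent_diff[of m "-r"] by simp
qed

lemma no_pent_between_pos_neg:
  assumes "0 < s"
  shows "pent m \<le> pent (s - 1) \<or> pent (-s) \<le> pent m"
proof (cases "s \<le> m \<or> m \<le> -s")
  case True
  then have "0 \<le> (m + s) * (3 * (m - s) + 1)"
    using assms by (auto intro: mult_nonpos_nonpos)
  then show ?thesis using double_pent_diff[of m "-s"] by simp
next
  case False
  then have "(m - (s - 1)) * (3 * (m + (s - 1)) + 1) \<le> 0"
    using assms by (intro mult_nonpos_nonneg) auto
  then show ?thesis using double_pent_diff[of m "s - 1"] by simp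
qed

lemma pfloor_before_pos_pent:
  assumes "0 < r"
  shows "pfloor (pent r - 1) = pent (-r)" and "pent r - pent (-r) = r"
proof -
  show gap: "pent r - pent (-r) = r"
    using double_pent_diff[of r "-r"] by simp
  show "pfloor (pent r - 1) = pent (-r)"
  proof (rule pfloor_eqI)
    show "p \<le> pent (-r)" if "p \<in> pentagonals" "p \<le> pent r - 1" for p
      using that no_pent_between_neg_pos[OF assms] unfolding pentagonals_def by force
  qed (use gap assms pent_nonneg[of "-r"] in auto)
qed

lemma pfloor_before_neg_pent:
  assumes "0 < s"
  shows "pfloor (pent (-s) - 1) = pent (s - 1)" and "pent (-s) - pent (s - 1) = 2 * s - 1"
proof -
  show gap: "pent (-s) - pent (s - 1) = 2 * s - 1"
    using double_pent_diff[of "-s" "s - 1"] by (simp add: algebra_simps)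
  show "pfloor (pent (-s) - 1) = pent (s - 1)"
  proof (rule pfloor_eqI)
    show "p \<le> pent (s - 1)" if "p \<in> pentagonals" "p \<le> pent (-s) - 1" for p
      using that no_pent_between_pos_neg[OF assms] unfolding pentagonals_def by force
  qed (use gap assms pent_nonneg[of "s - 1"] in auto)
qed

section \<open>Franklin's involution\<close>

text \<open>The base of a partition into distinct parts is its smallest part, the slope the number
  of consecutive parts \<open>Max S, Max S - 1, \<dots>\<close>. The base move deletes the base \<open>b\<close> and adds 1
  to each of the \<open>b\<close> largest parts: on the set of parts it replaces \<open>b\<close> and \<open>Max S + 1 - b\<close>
  by \<open>Max S + 1\<close>. The slope move subtracts 1 from each of the \<open>k\<close> parts of the slope and adds
  the new part \<open>k\<close>. The condition \<open>Min S = Suc (Max S) - slope S\<close> says that the slope reaches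
  down to the base, where each move is blocked one step earlier than usual.\<close>

definition slope :: "nat set \<Rightarrow> nat" where
  "slope S = (LEAST j. Max S - j \<notin> S)"

definition base_move :: "nat set \<Rightarrow> nat set" where
  "base_move S = insert (Suc (Max S)) (S - {Min S, Suc (Max S) - Min S})"

definition slope_move :: "nat set \<Rightarrow> nat set" where
  "slope_move S = insert (slope S) (insert (Max S - slope S) (S - {Max S}))"

definition base_movable :: "nat set \<Rightarrow> bool" where
  "base_movable S \<longleftrightarrow>
     Min S \<le> slope S \<and> \<not> (Min S = slope S \<and> Min S = Suc (Max S) - slope S)"

definition slope_movable :: "nat set \<Rightarrow> bool" where
  "slope_movable S \<longleftrightarrow>
     slope S < Min S \<and> \<not> (Min S = Suc (slope S) \<and> Min S = Suc (Max S) - slope S)"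

lemma sum_card_split_part:
  fixes T :: "'a::comm_monoid_add set"
  assumes "finite T" "a \<noteq> b" "a \<notin> T" "b \<notin> T" "a + b \<notin> T"
  shows "\<Sum>(insert a (insert b T)) = \<Sum>(insert (a + b) T)"
    and "card (insert a (insert b T)) = Suc (card (insert (a + b) T))"
  using assms by (simp_all add: add.assoc)

locale distinct_parts =
  fixes S :: "nat set"
  assumes fin: "finite S" and ne: "S \<noteq> {}" and no_zero: "0 \<notin> S"
begin

lemma Min_pos: "0 < Min S"
  using fin ne no_zero Min_in by (cases "Min S") fastforce+

lemma Suc_Max_notin: "Suc (Max S) \<notin> S"
  using Max_ge[OF fin] by fastforce

lemma slope_notin: "Max S - slope S \<notin> S"
  unfolding slope_def by (rule LeastI[of _ "Max S"]) (simp add: no_zero)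

lemma slope_mem: "j < slope S \<Longrightarrow> Max S - j \<in> S"
  unfolding slope_def using not_less_Least by blast

lemma slope_le_Max: "slope S \<le> Max S"
  unfolding slope_def by (rule Least_le) (simp add: no_zero)

lemma slope_pos: "0 < slope S"
  using slope_notin fin ne by (cases "slope S") auto

lemma slope_geI: "(\<And>j. j < k \<Longrightarrow> Max S - j \<in> S) \<Longrightarrow> k \<le> slope S"
  using slope_notin not_less by blast

lemma slope_eqI: "(\<And>j. j < k \<Longrightarrow> Max S - j \<in> S) \<Longrightarrow> Max S - k \<notin> S \<Longrightarrow> slope S = k"
  using slope_geI slope_mem by (meson antisym not_less)

lemma Min_le_slope_bottom: "Min S \<le> Suc (Max S) - slope S"
proof -
  have "Max S - (slope S - 1) = Suc (Max S) - slope S"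
    using slope_pos slope_le_Max by linarith
  then show ?thesis
    using slope_mem[of "slope S - 1"] slope_pos fin by (metis Min_le diff_less zero_less_one)
qed

lemma base_move_bound:
  assumes "base_movable S"
  shows "2 * Min S \<le> Max S" and "Suc (Max S) - Min S \<in> S"
proof -
  show "2 * Min S \<le> Max S"
    using assms Min_le_slope_bottom slope_le_Max unfolding base_movable_def by linarith
  have "Suc (Max S) - Min S = Max S - (Min S - 1)"
    using Min_pos by simp
  also have "\<dots> \<in> S"
    using assms Min_pos unfolding base_movable_def by (intro slope_mem) linarith
  finally show "Suc (Max S) - Min S \<in> S" .
qed

lemma slope_move_bound:
  assumes "slope_movable S"
  shows "slope S < Max S - slope S"
  using assms Min_le_slope_bottom slope_le_Max slope_pos unfolding slope_movable_def by linarith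

lemma distinct_parts_base_move: "distinct_parts (base_move S)"
  using fin no_zero unfolding base_move_def by unfold_locales auto

lemma distinct_parts_slope_move:
  assumes "slope_movable S"
  shows "distinct_parts (slope_move S)"
  using fin no_zero slope_pos slope_move_bound[OF assms]
  unfolding slope_move_def by unfold_locales auto

lemma sum_card_base_move:
  assumes movable: "base_movable S"
  shows "\<Sum>(base_move S) = \<Sum>S" and "card S = Suc (card (base_move S))"
proof -
  let ?a = "Min S" and ?b = "Suc (Max S) - Min S"
  define T where "T = S - {?a, ?b}"
  note bound = base_move_bound[OF movable]
  have S_eq: "S = insert ?a (insert ?b T)"
    using bound Min_in[OF fin ne] unfolding T_def by auto
  have move_eq: "base_move S = insert (?a + ?b) T"
    using bound unfolding base_move_def T_def by simp
  have "finite T" "?a \<noteq> ?b" "?a \<notin> T" "?b \<notin> T" "?a + ?b \<notin> T"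
    using bound fin Suc_Max_notin unfolding T_def by auto
  from sum_card_split_part[OF this]
  show "\<Sum>(base_move S) = \<Sum>S" "card S = Suc (card (base_move S))"
    using S_eq move_eq by simp_all
qed

lemma Max_base_move: "Max (base_move S) = Suc (Max S)"
  using fin Max_ge[OF fin] unfolding base_move_def by (intro Max_eqI) (auto simp: le_Suc_eq)

lemma Min_base_move:
  assumes "base_movable S"
  shows "Min S < Min (base_move S)"
proof -
  interpret moved: distinct_parts "base_move S"
    by (rule distinct_parts_base_move)
  have "Min S < x" if "x \<in> base_move S" for x
  proof (cases "x = Suc (Max S)")
    case False
    then have "x \<in> S" "x \<noteq> Min S"
      using that unfolding base_move_def by auto
    then show ?thesis
      using Min_le[OF fin] le_neq_implies_less by blast
  qed (use base_move_bound(1)[OF assms] in simp)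
  then show ?thesis
    using moved.fin moved.ne by simp
qed

lemma slope_base_move:
  assumes movable: "base_movable S"
  shows "slope (base_move S) = Min S"
proof -
  interpret moved: distinct_parts "base_move S"
    by (rule distinct_parts_base_move)
  note bound = base_move_bound[OF movable]
  show ?thesis
  proof (rule moved.slope_eqI; unfold Max_base_move)
    fix j assume "j < Min S"
    show "Suc (Max S) - j \<in> base_move S"
    proof (cases j)
      case (Suc i)
      have "Suc (Max S) - j = Max S - i" and "i < slope S"
        using Suc \<open>j < Min S\<close> movable unfolding base_movable_def by auto
      then show ?thesis
        using slope_mem[of i] Suc \<open>j < Min S\<close> bound(1) unfolding base_move_def by auto
    qed (simp add: base_move_def)
  next
    show "Suc (Max S) - Min S \<notin> base_move S"
      using Min_pos unfolding base_move_def by auto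
  qed
qed

lemma base_move_inverse:
  assumes movable: "base_movable S"
  shows "slope_movable (base_move S)" and "slope_move (base_move S) = S"
proof -
  note bound = base_move_bound[OF movable]
  show "slope_movable (base_move S)"
    using Min_base_move[OF movable] bound(1)
    unfolding slope_movable_def slope_base_move[OF movable] Max_base_move by auto
  have "base_move S - {Suc (Max S)} = S - {Min S, Suc (Max S) - Min S}"
    using Suc_Max_notin unfolding base_move_def by auto
  then show "slope_move (base_move S) = S"
    using bound Min_in[OF fin ne] Suc_Max_notin
    unfolding slope_move_def slope_base_move[OF movable] Max_base_move by auto
qed

lemma slope_notin_if_slope_movable:
  assumes "slope_movable S"
  shows "slope S \<notin> S"
  using assms Min_le[OF fin] unfolding slope_movable_def by fastforce

lemma sum_card_slope_move:
  assumes movable: "slope_movable S"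
  shows "\<Sum>(slope_move S) = \<Sum>S" and "card (slope_move S) = Suc (card S)"
proof -
  let ?a = "slope S" and ?b = "Max S - slope S"
  define T where "T = S - {Max S}"
  note bound = slope_move_bound[OF movable]
  have S_eq: "S = insert (?a + ?b) T"
    using bound Max_in[OF fin ne] unfolding T_def by auto
  have move_eq: "slope_move S = insert ?a (insert ?b T)"
    unfolding slope_move_def T_def ..
  have "finite T" "?a \<noteq> ?b" "?a \<notin> T" "?b \<notin> T" "?a + ?b \<notin> T"
    using bound fin slope_notin slope_notin_if_slope_movable[OF movable] unfolding T_def by auto
  from sum_card_split_part[OF this]
  show "\<Sum>(slope_move S) = \<Sum>S" "card (slope_move S) = Suc (card S)"
    using S_eq move_eq by simp_all
qed

lemma Max_slope_move:
  assumes movable: "slope_movable S"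
  shows "Max (slope_move S) = Max S - 1"
proof (rule Max_eqI)
  note bound = slope_move_bound[OF movable]
  show "finite (slope_move S)"
    using fin unfolding slope_move_def by simp
  show "x \<le> Max S - 1" if "x \<in> slope_move S" for x
    using that bound slope_pos Max_ge[OF fin] unfolding slope_move_def by fastforce
  show "Max S - 1 \<in> slope_move S"
    using slope_mem[of 1] slope_pos bound unfolding slope_move_def
    by (cases "slope S = 1") auto
qed

lemma Min_slope_move:
  assumes movable: "slope_movable S"
  shows "Min (slope_move S) = slope S"
proof (rule Min_eqI)
  show "finite (slope_move S)"
    using fin unfolding slope_move_def by simp
  show "slope S \<le> x" if "x \<in> slope_move S" for x
    using that slope_move_bound[OF movable] movable Min_le[OF fin]
    unfolding slope_move_def slope_movable_def by fastforce
qed (simp add: slope_move_def)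

lemma slope_le_slope_slope_move:
  assumes movable: "slope_movable S"
  shows "slope S \<le> slope (slope_move S)"
proof -
  interpret moved: distinct_parts "slope_move S"
    using distinct_parts_slope_move[OF movable] .
  show ?thesis
  proof (rule moved.slope_geI, unfold Max_slope_move[OF movable])
    fix j assume j: "j < slope S"
    show "Max S - 1 - j \<in> slope_move S"
    proof (cases "Suc j = slope S")
      case True
      then show ?thesis unfolding slope_move_def by simp
    next
      case False
      then have "Max S - Suc j \<in> S" "Max S - Suc j \<noteq> Max S"
        using j slope_mem slope_le_Max by auto
      then show ?thesis unfolding slope_move_def by simp
    qed
  qed
qed

lemma slope_move_inverse:
  assumes movable: "slope_movable S"
  shows "base_movable (slope_move S)" and "base_move (slope_move S) = S"
proof -
  note bound = slope_move_bound[OF movable]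
  have Suc_Max: "Suc (Max S - 1) = Max S"
    using bound by simp
  show "base_movable (slope_move S)"
    using slope_le_slope_slope_move[OF movable] bound
    unfolding base_movable_def Min_slope_move[OF movable] Max_slope_move[OF movable] Suc_Max
    by auto
  have "slope_move S - {slope S, Max S - slope S} = S - {Max S}"
    using bound slope_notin slope_notin_if_slope_movable[OF movable] unfolding slope_move_def by auto
  then show "base_move (slope_move S) = S"
    using Max_in[OF fin ne]
    unfolding base_move_def Min_slope_move[OF movable] Max_slope_move[OF movable] Suc_Max
    by auto
qed

lemma franklin_fixed_point_interval:
  assumes "\<not> base_movable S" "\<not> slope_movable S"
  shows "S = {Min S..<Min S + slope S}" and "Min S = slope S \<or> Min S = Suc (slope S)"
proof -
  have bottom: "Min S = Suc (Max S) - slope S" and "Min S = slope S \<or> Min S = Suc (slope S)"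
    using assms unfolding base_movable_def slope_movable_def by auto
  then show "Min S = slope S \<or> Min S = Suc (slope S)" by simp
  show "S = {Min S..<Min S + slope S}"
  proof
    show "S \<subseteq> {Min S..<Min S + slope S}"
      using bottom slope_le_Max Max_ge[OF fin] Min_le[OF fin] by fastforce
    show "{Min S..<Min S + slope S} \<subseteq> S"
    proof
      fix x assume "x \<in> {Min S..<Min S + slope S}"
      then have "Max S - x < slope S" "Max S - (Max S - x) = x"
        using bottom slope_le_Max by auto
      then show "x \<in> S"
        using slope_mem by metis
    qed
  qed
qed

end

lemma distinct_parts_partition:
  "S \<in> distinct_partitions n \<Longrightarrow> 1 \<le> n \<Longrightarrow> distinct_parts S"
  unfolding distinct_partitions_def by unfold_locales auto

lemma interval_props:
  assumes "0 < a" "0 < k"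
  shows "distinct_parts {a..<a + k}" and "Min {a..<a + k} = a" and "Max {a..<a + k} = a + k - 1"
    and "slope {a..<a + k} = k"
proof -
  show parts: "distinct_parts {a..<a + k}"
    using assms by unfold_locales auto
  show "Min {a..<a + k} = a"
    using assms by (intro Min_eqI) auto
  show Max: "Max {a..<a + k} = a + k - 1"
    using assms by (intro Max_eqI) auto
  show "slope {a..<a + k} = k"
    by (rule distinct_parts.slope_eqI[OF parts]) (use assms in \<open>auto simp: Max\<close>)
qed

lemma double_sum_interval: "2 * \<Sum>{a..<a + k} + k = k * (2 * a + k :: nat)"
  by (induction k) (simp_all add: algebra_simps)

text \<open>The fixed points of Franklin's involution: \<open>{k+1..2k}\<close> for \<open>r = k > 0\<close> and
  \<open>{k..2k-1}\<close> for \<open>r = -k < 0\<close>.\<close>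

definition pent_block :: "int \<Rightarrow> nat set" where
  "pent_block r = (let k = nat \<bar>r\<bar>; b = k + of_bool (0 < r) in {b..<b + k})"

lemma sum_pent_block: "\<Sum>(pent_block r) = nat (pent r)"
proof -
  define k where "k = nat \<bar>r\<bar>"
  define b where "b = k + of_bool (0 < r)"
  have "int (2 * \<Sum>{b..<b + k} + k) = int (k * (2 * b + k))"
    by (simp only: double_sum_interval)
  then have "2 * int (\<Sum>(pent_block r)) = int k * (2 * int b + int k) - int k"
    unfolding pent_block_def Let_def k_def[symmetric] b_def[symmetric] by simp
  also have "\<dots> = 2 * pent r"
    unfolding double_pent b_def k_def by (simp add: algebra_simps)
  finally show ?thesis
    by (simp flip: of_nat_sum)
qed

lemma card_pent_block: "card (pent_block r) = nat \<bar>r\<bar>"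
  unfolding pent_block_def Let_def by simp

lemma pent_block_props:
  assumes "r \<noteq> 0"
  shows "even (Max (pent_block r)) \<longleftrightarrow> 0 < r"
    and "\<not> base_movable (pent_block r)" and "\<not> slope_movable (pent_block r)"
proof -
  define k where "k = nat \<bar>r\<bar>"
  define b where "b = k + of_bool (0 < r)"
  have "0 < b" "0 < k"
    using assms unfolding b_def k_def by auto
  note props = interval_props[OF this]
  have block: "pent_block r = {b..<b + k}"
    unfolding pent_block_def Let_def k_def b_def ..
  have "Min (pent_block r) = b" "Max (pent_block r) = b + k - 1" "slope (pent_block r) = k"
    unfolding block by (fact props(2-4))+
  then show "even (Max (pent_block r)) \<longleftrightarrow> 0 < r"
    and "\<not> base_movable (pent_block r)" "\<not> slope_movable (pent_block r)"
    using \<open>0 < k\<close> unfolding base_movable_def slope_movable_def b_def by auto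
qed

lemma franklin_fixed_points:
  assumes "1 \<le> n"
  shows "{S \<in> distinct_partitions n. \<not> base_movable S \<and> \<not> slope_movable S} =
    pent_block ` {r. pent r = int n}"
proof (intro equalityI subsetI)
  fix S assume "S \<in> {S \<in> distinct_partitions n. \<not> base_movable S \<and> \<not> slope_movable S}"
  then have S: "S \<in> distinct_partitions n" "\<not> base_movable S" "\<not> slope_movable S"
    by auto
  interpret distinct_parts S
    using distinct_parts_partition[OF S(1) assms] .
  define k where "k = slope S"
  have "0 < k" using slope_pos unfolding k_def .
  note interval = franklin_fixed_point_interval[OF S(2,3), folded k_def]
  define r where "r = (if Min S = k then - int k else int k)"
  have "nat \<bar>r\<bar> = k" "nat \<bar>r\<bar> + of_bool (0 < r) = Min S"
    using interval(2) \<open>0 < k\<close> unfolding r_def by auto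
  then have "S = pent_block r"
    using interval(1) unfolding pent_block_def Let_def by simp
  moreover have "\<Sum>S = n"
    using S(1) unfolding distinct_partitions_def by simp
  then have "pent r = int n"
    using sum_pent_block[of r] pent_nonneg[of r] \<open>S = pent_block r\<close> by simp
  ultimately show "S \<in> pent_block ` {r. pent r = int n}" by blast
next
  fix S assume "S \<in> pent_block ` {r. pent r = int n}"
  then obtain r where r: "pent r = int n" "S = pent_block r" by auto
  then have "r \<noteq> 0" using assms by auto
  have "0 \<notin> pent_block r" "finite (pent_block r)"
    unfolding pent_block_def Let_def using \<open>r \<noteq> 0\<close> by auto
  then show "S \<in> {S \<in> distinct_partitions n. \<not> base_movable S \<and> \<not> slope_movable S}"
    using r sum_pent_block[of r] pent_block_props[OF \<open>r \<noteq> 0\<close>]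
    unfolding distinct_partitions_def by auto
qed

section \<open>Signed sums over distinct partitions\<close>

lemma sum_sign_reversing_bij:
  fixes g :: "'a \<Rightarrow> 'b::ab_group_add"
  assumes "finite D" "A \<subseteq> D" "B \<subseteq> D" "A \<inter> B = {}" "bij_betw h A B"
    and "\<And>x. x \<in> A \<Longrightarrow> g (h x) = - g x"
  shows "sum g D = sum g (D - A - B)"
proof -
  have "sum g B = (\<Sum>x\<in>A. g (h x))"
    by (rule sum.reindex_bij_betw[OF assms(5), symmetric])
  also have "\<dots> = - sum g A"
    using assms(6) by (simp add: sum_negf)
  finally have "sum g (A \<union> B) = 0"
    using assms(1-4) by (simp add: sum.union_disjoint finite_subset)
  moreover have "sum g D = sum g (D - (A \<union> B)) + sum g (A \<union> B)"
    using assms(1-3) by (intro sum.subset_diff) auto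
  ultimately show ?thesis
    by (simp add: set_diff_eq Int_assoc Diff_Un)
qed

lemma finite_distinct_partitions: "finite (distinct_partitions n)"
proof (rule finite_subset)
  show "distinct_partitions n \<subseteq> Pow {..n}"
    unfolding distinct_partitions_def by (auto intro: member_le_sum[where f = id, simplified])
qed simp

lemma base_move_partition:
  assumes "S \<in> distinct_partitions n" "1 \<le> n" "base_movable S"
  shows "base_move S \<in> distinct_partitions n" and "slope_movable (base_move S)"
    and "slope_move (base_move S) = S"
proof -
  interpret distinct_parts S
    using assms(1,2) by (rule distinct_parts_partition)
  interpret moved: distinct_parts "base_move S"
    by (rule distinct_parts_base_move)
  show "base_move S \<in> distinct_partitions n"
    using assms sum_card_base_move moved.fin moved.no_zero unfolding distinct_partitions_def by simp
  show "slope_movable (base_move S)" "slope_move (base_move S) = S"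
    using base_move_inverse assms(3) by blast+
qed

lemma slope_move_partition:
  assumes "S \<in> distinct_partitions n" "1 \<le> n" "slope_movable S"
  shows "slope_move S \<in> distinct_partitions n" and "base_movable (slope_move S)"
    and "base_move (slope_move S) = S"
proof -
  interpret distinct_parts S
    using assms(1,2) by (rule distinct_parts_partition)
  interpret moved: distinct_parts "slope_move S"
    using assms(3) by (rule distinct_parts_slope_move)
  show "slope_move S \<in> distinct_partitions n"
    using assms sum_card_slope_move moved.fin moved.no_zero unfolding distinct_partitions_def by simp
  show "base_movable (slope_move S)" "base_move (slope_move S) = S"
    using slope_move_inverse assms(3) by blast+
qed

lemma bij_betw_base_move:
  assumes "1 \<le> n"
  shows "bij_betw base_move {S \<in> distinct_partitions n. base_movable S}
    {S \<in> distinct_partitions n. slope_movable S}"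
  by (rule bij_betw_byWitness[where f' = slope_move])
    (use base_move_partition slope_move_partition assms in auto)

lemma sum_distinct_partitions_franklin:
  fixes g :: "nat set \<Rightarrow> 'a::ab_group_add"
  assumes "1 \<le> n"
    and "\<And>S. S \<in> distinct_partitions n \<Longrightarrow> base_movable S \<Longrightarrow> g (base_move S) = - g S"
  shows "(\<Sum>S\<in>distinct_partitions n. g S) = (\<Sum>r | pent r = int n. g (pent_block r))"
proof -
  let ?A = "{S \<in> distinct_partitions n. base_movable S}"
    and ?B = "{S \<in> distinct_partitions n. slope_movable S}"
  have disjoint: "?A \<inter> ?B = {}"
    unfolding base_movable_def slope_movable_def by auto
  have "(\<Sum>S\<in>distinct_partitions n. g S) = (\<Sum>S\<in>distinct_partitions n - ?A - ?B. g S)"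
    by (rule sum_sign_reversing_bij[OF finite_distinct_partitions _ _ disjoint bij_betw_base_move[OF assms(1)]])
      (use assms(2) in auto)
  also have "distinct_partitions n - ?A - ?B = pent_block ` {r. pent r = int n}"
    unfolding franklin_fixed_points[OF assms(1), symmetric] by auto
  also have "(\<Sum>S\<in>pent_block ` {r. pent r = int n}. g S) = (\<Sum>r | pent r = int n. g (pent_block r))"
  proof -
    have "inj_on pent_block {r. pent r = int n}"
    proof (rule inj_onI)
      fix x y assume "x \<in> {r. pent r = int n}" "y \<in> {r. pent r = int n}"
      then have "pent x = pent y" by simp
      then show "x = y" by (rule injD[OF inj_pent])
    qed
    then show ?thesis
      by (simp add: sum.reindex)
  qed
  finally show ?thesis .
qed

definition neg_one_pow :: "int \<Rightarrow> int" where
  "neg_one_pow x = (if even x then 1 else -1)"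

lemma neg_one_pow_nat: "(-1) ^ k = neg_one_pow (int k)"
  unfolding neg_one_pow_def by simp

definition card_sign_sum :: "nat \<Rightarrow> int" where
  "card_sign_sum n = (\<Sum>S\<in>distinct_partitions n. (-1) ^ card S)"

definition max_sign_sum :: "nat \<Rightarrow> int" where
  "max_sign_sum n = (\<Sum>S\<in>distinct_partitions n. (-1) ^ Max S)"

theorem card_sign_sum_pentagonal:
  assumes "1 \<le> n"
  shows "card_sign_sum n = (if int n \<in> pentagonals then neg_one_pow (R (int n)) else 0)"
proof -
  have "card_sign_sum n = (\<Sum>r | pent r = int n. (-1) ^ card (pent_block r))"
    unfolding card_sign_sum_def
  proof (rule sum_distinct_partitions_franklin[OF assms])
    fix S assume "S \<in> distinct_partitions n" "base_movable S"
    then show "(-1::int) ^ card (base_move S) = - ((-1) ^ card S)"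
      using distinct_parts.sum_card_base_move[OF distinct_parts_partition] assms by simp
  qed
  then show ?thesis
    unfolding pent_preimage card_pent_block neg_one_pow_def by simp
qed

theorem max_sign_sum_pentagonal:
  assumes "1 \<le> n"
  shows "max_sign_sum n = (if int n \<in> pentagonals then (if 0 < R (int n) then 1 else -1) else 0)"
proof -
  have "max_sign_sum n = (\<Sum>r | pent r = int n. (-1) ^ Max (pent_block r))"
    unfolding max_sign_sum_def
  proof (rule sum_distinct_partitions_franklin[OF assms])
    fix S assume "S \<in> distinct_partitions n" "base_movable S"
    then show "(-1::int) ^ Max (base_move S) = - ((-1) ^ Max S)"
      using distinct_parts.Max_base_move[OF distinct_parts_partition] assms by simp
  qed
  moreover have "R (int n) \<noteq> 0" if "int n \<in> pentagonals"
    using that assms unfolding pentagonals_def by auto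
  ultimately show ?thesis
    unfolding pent_preimage using pent_block_props(1) by (simp add: neg_one_even_power neg_one_odd_power)
qed

section \<open>Partitions without the part 1\<close>

definition one_free_partitions :: "nat \<Rightarrow> nat set set" where
  "one_free_partitions n = {S \<in> distinct_partitions n. 1 \<notin> S}"

lemma bij_betw_insert_one:
  "bij_betw (insert 1) (one_free_partitions n) {S \<in> distinct_partitions (Suc n). 1 \<in> S}"
proof (rule bij_betw_byWitness[where f' = "\<lambda>S. S - {1}"])
  show "insert 1 ` one_free_partitions n \<subseteq> {S \<in> distinct_partitions (Suc n). 1 \<in> S}"
    unfolding one_free_partitions_def distinct_partitions_def by auto
  show "(\<lambda>S. S - {1}) ` {S \<in> distinct_partitions (Suc n). 1 \<in> S} \<subseteq> one_free_partitions n"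
    unfolding one_free_partitions_def distinct_partitions_def by (auto simp: sum.remove)
qed (auto simp: one_free_partitions_def)

lemma sum_distinct_partitions_Suc:
  "(\<Sum>S\<in>distinct_partitions (Suc n). g S) =
    (\<Sum>S\<in>one_free_partitions (Suc n). g S) + (\<Sum>S\<in>one_free_partitions n. g (insert 1 S))"
proof -
  let ?ones = "{S \<in> distinct_partitions (Suc n). 1 \<in> S}"
  have "one_free_partitions (Suc n) \<union> ?ones = distinct_partitions (Suc n)"
    unfolding one_free_partitions_def by auto
  moreover have "sum g (one_free_partitions (Suc n) \<union> ?ones) =
      sum g (one_free_partitions (Suc n)) + sum g ?ones"
    by (rule sum.union_disjoint) (auto simp: one_free_partitions_def finite_distinct_partitions)
  ultimately have "(\<Sum>S\<in>distinct_partitions (Suc n). g S) =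
      (\<Sum>S\<in>one_free_partitions (Suc n). g S) + (\<Sum>S\<in>?ones. g S)"
    by simp
  also have "(\<Sum>S\<in>?ones. g S) = (\<Sum>S\<in>one_free_partitions n. g (insert 1 S))"
    by (rule sum.reindex_bij_betw[OF bij_betw_insert_one, symmetric])
  finally show ?thesis .
qed

definition one_free_card_sign_sum :: "nat \<Rightarrow> int" where
  "one_free_card_sign_sum n = (\<Sum>S\<in>one_free_partitions n. (-1) ^ card S)"

definition one_free_max_sign_sum :: "nat \<Rightarrow> int" where
  "one_free_max_sign_sum n = (\<Sum>S\<in>one_free_partitions n. (-1) ^ Max S)"

lemma card_sign_sum_Suc:
  "card_sign_sum (Suc n) = one_free_card_sign_sum (Suc n) - one_free_card_sign_sum n"
proof -
  have "(-1::int) ^ card (insert 1 S) = - ((-1) ^ card S)" if "S \<in> one_free_partitions n" for S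
    using that unfolding one_free_partitions_def distinct_partitions_def by simp
  then show ?thesis
    unfolding card_sign_sum_def one_free_card_sign_sum_def sum_distinct_partitions_Suc
    by (simp add: sum_negf)
qed

lemma Max_insert_one:
  assumes "S \<in> distinct_partitions n" "1 \<le> n"
  shows "Max (insert 1 S) = Max S"
proof -
  interpret distinct_parts S
    using assms by (rule distinct_parts_partition)
  have "Max S \<noteq> 0"
    using Max_in[OF fin ne] no_zero by metis
  then show ?thesis
    by (simp add: fin ne max_def)
qed

lemma max_sign_sum_Suc:
  assumes "1 \<le> n"
  shows "max_sign_sum (Suc n) = one_free_max_sign_sum (Suc n) + one_free_max_sign_sum n"
proof -
  have "max_sign_sum (Suc n) =
      one_free_max_sign_sum (Suc n) + (\<Sum>S\<in>one_free_partitions n. (-1) ^ Max (insert 1 S))"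
    unfolding max_sign_sum_def one_free_max_sign_sum_def by (rule sum_distinct_partitions_Suc)
  also have "(\<Sum>S\<in>one_free_partitions n. (-1::int) ^ Max (insert 1 S)) = one_free_max_sign_sum n"
    unfolding one_free_max_sign_sum_def
    by (rule sum.cong[OF refl]) (use Max_insert_one assms in \<open>auto simp: one_free_partitions_def\<close>)
  finally show ?thesis .
qed

lemma card_diff_eq_sum_sign:
  assumes "finite A"
  shows "int (card {x \<in> A. P x}) - int (card {x \<in> A. \<not> P x}) = (\<Sum>x\<in>A. if P x then 1 else -1)"
  using assms by (simp add: sum.If_cases Int_def sum_negf conj_commute)

lemma M_e_minus_M_o_Suc:
  "int (M_e (Suc n)) - int (M_o (Suc n)) = one_free_max_sign_sum (Suc n) - one_free_card_sign_sum n"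
proof -
  have "int (M_e (Suc n)) - int (M_o (Suc n)) = (\<Sum>S\<in>distinct_partitions (Suc n). neg_one_pow (dcrank S))"
    unfolding M_e_def M_o_def neg_one_pow_def
    by (rule card_diff_eq_sum_sign[OF finite_distinct_partitions])
  also have "\<dots> = one_free_max_sign_sum (Suc n) - one_free_card_sign_sum n"
  proof -
    have "neg_one_pow (dcrank (insert 1 S)) = - ((-1) ^ card S)" if "S \<in> one_free_partitions n" for S
      using that unfolding one_free_partitions_def distinct_partitions_def dcrank_def neg_one_pow_def
      by simp
    moreover have "neg_one_pow (dcrank S) = (-1) ^ Max S" if "S \<in> one_free_partitions (Suc n)" for S
      using that unfolding one_free_partitions_def dcrank_def neg_one_pow_nat by simp
    ultimately show ?thesis
      unfolding sum_distinct_partitions_Suc one_free_max_sign_sum_def one_free_card_sign_sum_def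
      by (simp add: sum_negf)
  qed
  finally show ?thesis .
qed

section \<open>Partial sums along the pentagonal numbers\<close>

lemma one_free_partitions_0: "one_free_partitions 0 = {{}}"
  unfolding one_free_partitions_def distinct_partitions_def by (auto simp: sum_eq_0_iff)

lemma one_free_partitions_1: "one_free_partitions 1 = {}"
proof -
  have False if "S \<in> distinct_partitions 1" "1 \<notin> S" for S
  proof -
    interpret distinct_parts S
      using that(1) by (rule distinct_parts_partition) simp
    have "Max S \<le> \<Sum>S"
      using member_le_sum[of "Max S" S "\<lambda>x. x"] fin Max_in[OF fin ne] by simp
    then have "Max S \<le> 1"
      using that(1) unfolding distinct_partitions_def by simp
    moreover have "Max S \<noteq> 0" "Max S \<noteq> 1"
      using Max_in[OF fin ne] no_zero that(2) by metis+
    ultimately show False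
      by linarith
  qed
  then show ?thesis
    unfolding one_free_partitions_def by blast
qed

lemma one_free_card_sign_sum_closed:
  "one_free_card_sign_sum n = (let r = R (pfloor (int n)) in if 0 \<le> r then neg_one_pow r else 0)"
proof (induction n)
  case 0
  have "pfloor 0 = 0"
    using pfloor_pentagonal[of 0] pent_in_pentagonals[of 0] by simp
  moreover have "R 0 = 0"
    using R_pent[of 0] by simp
  ultimately show ?case
    by (simp add: one_free_card_sign_sum_def one_free_partitions_0 neg_one_pow_def)
next
  case (Suc n)
  have step: "one_free_card_sign_sum (Suc n) = card_sign_sum (Suc n) + one_free_card_sign_sum n"
    using card_sign_sum_Suc[of n] by simp
  show ?case
  proof (cases "int (Suc n) \<in> pentagonals")
    case False
    then show ?thesis
      using step Suc.IH card_sign_sum_pentagonal[of "Suc n"] pfloor_Suc by simp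
  next
    case True
    then obtain r where r: "int (Suc n) = pent r"
      unfolding pentagonals_def by auto
    then have "r \<noteq> 0" by auto
    have at_pent: "pfloor (int (Suc n)) = pent r" "card_sign_sum (Suc n) = neg_one_pow r"
      using card_sign_sum_pentagonal[of "Suc n", unfolded r] unfolding r
      by (simp_all add: pfloor_pentagonal)
    show ?thesis
    proof (cases "0 < r")
      case True
      then have "pfloor (int n) = pent (-r)"
        using pfloor_before_pos_pent(1)[of r] r[symmetric] by simp
      then show ?thesis
        using step Suc.IH at_pent True by simp
    next
      case False
      then have "pfloor (int n) = pent (-r - 1)"
        using pfloor_before_neg_pent(1)[of "-r"] r[symmetric] \<open>r \<noteq> 0\<close> by simp
      then show ?thesis
        using step Suc.IH at_pent False \<open>r \<noteq> 0\<close> by (simp add: neg_one_pow_def)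
    qed
  qed
qed

text \<open>The value of \<^const>\<open>one_free_max_sign_sum\<close> at the pentagonal number \<open>pent r\<close>.\<close>

definition max_sign_at_pent :: "int \<Rightarrow> int" where
  "max_sign_at_pent r = (if 0 < r then (if odd r then 1 else -1) else if odd r then 0 else -2)"

lemma one_free_max_sign_sum_closed:
  assumes "1 \<le> n"
  shows "one_free_max_sign_sum n =
    neg_one_pow (int n - pfloor (int n)) * max_sign_at_pent (R (pfloor (int n)))"
  using assms
proof (induction n rule: nat_induct_at_least)
  case base
  have "pent (-1) = 1"
    by (simp add: pent_def)
  then have "pfloor 1 = 1" "R 1 = -1"
    using pfloor_pentagonal[of 1] pent_in_pentagonals[of "-1"] R_pent[of "-1"] by simp_all
  then show ?case
    unfolding one_free_max_sign_sum_def one_free_partitions_1 by (simp add: max_sign_at_pent_def)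
next
  case (Suc n)
  have step: "one_free_max_sign_sum (Suc n) = max_sign_sum (Suc n) - one_free_max_sign_sum n"
    using max_sign_sum_Suc[OF Suc.hyps] by simp
  show ?case
  proof (cases "int (Suc n) \<in> pentagonals")
    case False
    then show ?thesis
      using step Suc.IH max_sign_sum_pentagonal[of "Suc n"] pfloor_Suc
      by (simp add: neg_one_pow_def)
  next
    case True
    then obtain r where r: "int (Suc n) = pent r"
      unfolding pentagonals_def by auto
    have "r \<noteq> 0" "r \<noteq> -1"
      using r Suc.hyps by (auto simp: pent_def)
    have at_pent: "int (Suc n) - pfloor (int (Suc n)) = 0" "R (pfloor (int (Suc n))) = r"
      "max_sign_sum (Suc n) = (if 0 < r then 1 else -1)"
      using max_sign_sum_pentagonal[of "Suc n", unfolded r] unfolding r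
      by (simp_all add: pfloor_pentagonal)
    show ?thesis
    proof (cases "0 < r")
      case True
      then have "pfloor (int n) = pent (-r)" "int n - pent (-r) = r - 1"
        using pfloor_before_pos_pent[of r] r[symmetric] by simp_all
      then show ?thesis
        using step Suc.IH at_pent True by (simp add: neg_one_pow_def max_sign_at_pent_def)
    next
      case False
      then have "pfloor (int n) = pent (-r - 1)" "int n - pent (-r - 1) = -2 * r - 2"
        using pfloor_before_neg_pent[of "-r"] r[symmetric] \<open>r \<noteq> 0\<close> by simp_all
      then show ?thesis
        using step Suc.IH at_pent False \<open>r \<noteq> 0\<close> \<open>r \<noteq> -1\<close>
        by (simp add: neg_one_pow_def max_sign_at_pent_def)
    qed
  qed
qed

lemma M_e_minus_M_o_eq:
  assumes "1 \<le> n"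
  shows "int (M_e n) - int (M_o n) =
    (let k = int n; f = pfloor k in
      neg_one_pow (k - f) * max_sign_at_pent (R f) - (if 0 \<le> R f then neg_one_pow (R f) else 0)
      + (if k \<in> pentagonals then neg_one_pow (R k) else 0))"
proof -
  obtain m where m: "n = Suc m"
    using assms by (cases n) auto
  have "int (M_e n) - int (M_o n) =
      one_free_max_sign_sum n - one_free_card_sign_sum n + card_sign_sum n"
    using M_e_minus_M_o_Suc[of m] card_sign_sum_Suc[of m] m by simp
  then show ?thesis
    using one_free_max_sign_sum_closed[OF assms] one_free_card_sign_sum_closed[of n]
      card_sign_sum_pentagonal[OF assms]
    unfolding Let_def by simp
qed

theorem theorem1p7:
  fixes n :: nat
  assumes "n \<ge> 1"
  shows "int (M_e n) - int (M_o n) =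
    (let k = int n; f = pfloor k in
     if k \<in> pentagonals \<and> odd (R k) \<and> R k > 0 then 1
     else if k \<in> pentagonals then -1
     else if odd (R f) \<and> R f > 0 \<and> k mod 2 = f mod 2 then 2
     else if even (R f) \<and> R f > 0 \<and> k mod 2 = f mod 2 then -2
     else if even (R f) \<and> R f < 0 then -2 * (-1) ^ nat (k - f)
     else 0)"
proof -
  define k where "k = int n"
  define f where "f = pfloor k"
  have "f \<le> k" "R f \<noteq> 0" "k \<in> pentagonals \<Longrightarrow> f = k"
    using pfloor_props(2)[of k] R_pfloor_nonzero[of k] pfloor_pentagonal[of k] assms
    unfolding f_def k_def by auto
  moreover have "(-1) ^ nat (k - f) = neg_one_pow (k - f)"
    using neg_one_pow_nat[of "nat (k - f)"] \<open>f \<le> k\<close> by simp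
  moreover have "k mod 2 = f mod 2 \<longleftrightarrow> even (k - f)"
    by presburger
  ultimately show ?thesis
    using M_e_minus_M_o_eq[OF assms] unfolding Let_def k_def[symmetric] f_def[symmetric]
    by (cases "k \<in> pentagonals") (simp_all add: neg_one_pow_def max_sign_at_pent_def)
qed

end
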